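(* Let $X$ be a real Banach space with a normalized Schauder basis $\mathcal B=(e_n)_{n=1}^\infty$ with biorthogonal functionals $(e_n^* )$, and let $\mathcal E=(\varepsilon_n)_{n=1}^\infty$ be a sequence of nonnegative numbers. Each of the following conditions is sufficient for the brick $K_{\mathcal B,\mathcal E}$ to be solid: (1) $\mathcal B$ is an unconditional basis; (2) $\sum_{n=1}^\infty\varepsilon_n<\infty$.
   Context: The brick is $K_{\mathcal B,\mathcal E}=\{x\in X:\ |e_n^*(x)|\le\varepsilon_n \text{ for all } n\}$. The brick is called solid if for each $x\in K_{\mathcal B,\mathcal E}$ and all scalars $a_1,a_2,\dots$ with $|a_n|\le|e_n^*(x)|$ for all $n$, the series $\sum_{n=1}^\infty a_ne_n$ converges. A basis is unconditional if $\sum_n e_n^*(x)e_n$ converges unconditionally (under every permutation) for every $x\in X$; normalized means $\|e_n\|=1$. *)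

theory Defs
  imports "HOL-Analysis.Analysis"
begin

text \<open>Schauder basis (indexed from 0): every vector has a unique expansion
  as a norm-convergent series in the basis vectors.\<close>
definition schauder_basis :: "(nat \<Rightarrow> 'a::real_normed_vector) \<Rightarrow> bool" where
  "schauder_basis e \<longleftrightarrow> (\<forall>x. \<exists>!c::nat \<Rightarrow> real. (\<lambda>n. \<Sum>i<n. c i *\<^sub>R e i) \<longlonglongrightarrow> x)"

definition coord :: "(nat \<Rightarrow> 'a::real_normed_vector) \<Rightarrow> nat \<Rightarrow> 'a \<Rightarrow> real" where
  "coord e n x = (THE c::nat \<Rightarrow> real. (\<lambda>m. \<Sum>i<m. c i *\<^sub>R e i) \<longlonglongrightarrow> x) n"

definition normalized_basis :: "(nat \<Rightarrow> 'a::real_normed_vector) \<Rightarrow> bool" where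
  "normalized_basis e \<longleftrightarrow> (\<forall>n. norm (e n) = 1)"

definition unconditional_basis :: "(nat \<Rightarrow> 'a::real_normed_vector) \<Rightarrow> bool" where
  "unconditional_basis e \<longleftrightarrow> schauder_basis e \<and>
     (\<forall>x. \<forall>p::nat \<Rightarrow> nat. bij p \<longrightarrow> summable (\<lambda>n. coord e (p n) x *\<^sub>R e (p n)))"

definition brick :: "(nat \<Rightarrow> 'a::real_normed_vector) \<Rightarrow> (nat \<Rightarrow> real) \<Rightarrow> 'a set" where
  "brick e \<epsilon> = {x. \<forall>n. \<bar>coord e n x\<bar> \<le> \<epsilon> n}"

definition solid_brick :: "(nat \<Rightarrow> 'a::real_normed_vector) \<Rightarrow> (nat \<Rightarrow> real) \<Rightarrow> bool" where
  "solid_brick e \<epsilon> \<longleftrightarrow> (\<forall>x\<in>brick e \<epsilon>. \<forall>a::nat \<Rightarrow> real.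
      (\<forall>n. \<bar>a n\<bar> \<le> \<bar>coord e n x\<bar>) \<longrightarrow> summable (\<lambda>n. a n *\<^sub>R e n))"

end

theory Submission
  imports Defs
begin

text \<open>Part (2) is the comparison test: \<open>\<bar>a\<^sub>n\<bar> \<le> \<bar>e\<^sub>n\<^sup>*(x)\<bar> \<le> \<epsilon>\<^sub>n\<close> and \<open>\<parallel>e\<^sub>n\<parallel> = 1\<close>.
  For part (1), convergence of every rearrangement of \<open>\<Sum> e\<^sub>n\<^sup>*(x) e\<^sub>n\<close> forces the sums over
  finite sets of large indices to be uniformly small: otherwise a single rearrangement moves
  infinitely many bad sets onto consecutive intervals and violates the Cauchy criterion.
  Multiplying the terms by \<open>t\<^sub>n = a\<^sub>n / e\<^sub>n\<^sup>*(x) \<in> [-1,1]\<close> at most doubles such a bound,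
  because for \<open>0 \<le> t\<^sub>n \<le> 1\<close> a finite sum \<open>\<Sum> t\<^sub>n f\<^sub>n\<close> is a convex combination of subsums.\<close>

lemma strict_mono_block_index:
  fixes N :: "nat \<Rightarrow> nat"
  assumes "strict_mono N" "N 0 = 0"
  shows "\<exists>!k. n \<in> {N k..<N (Suc k)}"
proof (rule ex_ex1I)
  define k where "k = (LEAST k. n < N (Suc k))"
  have "n < N (Suc n)" using strict_mono_imp_increasing[OF assms(1), of "Suc n"] by simp
  then have upper: "n < N (Suc k)" unfolding k_def by (rule LeastI)
  have "N k \<le> n"
  proof (cases k)
    case (Suc j)
    then have "\<not> n < N (Suc j)" unfolding k_def by (metis lessI not_less_Least)
    then show ?thesis using Suc by simp
  qed (use assms(2) in simp)
  with upper show "\<exists>k. n \<in> {N k..<N (Suc k)}" by auto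
next
  have "k \<le> k'" if "n \<in> {N k..<N (Suc k)}" "n \<in> {N k'..<N (Suc k')}" for k k'
  proof (rule ccontr)
    assume "\<not> k \<le> k'"
    then have "N (Suc k') \<le> N k" using assms(1) by (simp add: strict_mono_less_eq)
    with that show False by simp
  qed
  then show "k = k'" if "n \<in> {N k..<N (Suc k)}" "n \<in> {N k'..<N (Suc k')}" for k k'
    using that by (simp add: antisym)
qed

lemma bij_glue_block_involutions:
  fixes N :: "nat \<Rightarrow> nat"
  assumes "strict_mono N" "N 0 = 0"
    and block: "\<And>k n. n \<in> {N k..<N (Suc k)} \<Longrightarrow> \<sigma> k n \<in> {N k..<N (Suc k)}"
    and invol: "\<And>k n. \<sigma> k (\<sigma> k n) = n"
  obtains p where "bij p" "\<And>k n. n \<in> {N k..<N (Suc k)} \<Longrightarrow> p n = \<sigma> k n"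
proof
  define blk where "blk n = (THE k. n \<in> {N k..<N (Suc k)})" for n
  have blk: "n \<in> {N k..<N (Suc k)} \<longleftrightarrow> blk n = k" for n k
  proof -
    have unique: "\<exists>!k. n \<in> {N k..<N (Suc k)}" by (rule strict_mono_block_index[OF assms(1,2)])
    then have "n \<in> {N (blk n)..<N (Suc (blk n))}" unfolding blk_def by (rule theI')
    with unique show ?thesis by auto
  qed
  define p where "p n = \<sigma> (blk n) n" for n
  show "p n = \<sigma> k n" if "n \<in> {N k..<N (Suc k)}" for k n
  proof -
    have "blk n = k" using blk that by blast
    then show ?thesis by (simp add: p_def)
  qed
  have "p (p n) = n" for n
  proof -
    have "p n \<in> {N (blk n)..<N (Suc (blk n))}"
      unfolding p_def by (rule block) (use blk in blast)
    then have "blk (p n) = blk n" using blk by blast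
    then show ?thesis by (simp add: p_def invol)
  qed
  then show "bij p" by (rule involuntory_imp_bij)
qed

lemma exists_involution_image_eq:
  assumes "finite A" "finite B" "card A = card B"
  shows "\<exists>\<sigma>. (\<forall>x. \<sigma> (\<sigma> x) = x) \<and> \<sigma> ` A = B \<and> (\<forall>x. x \<notin> A \<union> B \<longrightarrow> \<sigma> x = x)"
proof -
  have "card (A - B) = card (B - A)"
    using assms by (simp add: card_Diff_subset_Int Int_commute)
  then obtain g where g: "bij_betw g (A - B) (B - A)"
    using assms by (meson finite_Diff finite_same_card_bij)
  define h where "h = inv_into (A - B) g"
  have h: "bij_betw h (B - A) (A - B)"
    unfolding h_def using g by (rule bij_betw_inv_into)
  define \<sigma> where "\<sigma> x = (if x \<in> A - B then g x else if x \<in> B - A then h x else x)" for x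
  have "\<sigma> (\<sigma> x) = x" for x
    using g h bij_betw_inv_into_left[OF g] bij_betw_inv_into_right[OF g]
    unfolding \<sigma>_def h_def by (auto simp: bij_betw_def)
  moreover have "\<sigma> ` A = B"
  proof -
    have "\<sigma> ` A = \<sigma> ` (A \<inter> B) \<union> \<sigma> ` (A - B)" by blast
    also have "\<sigma> ` (A \<inter> B) = A \<inter> B" by (auto simp: \<sigma>_def)
    also have "\<sigma> ` (A - B) = g ` (A - B)" by (auto simp: \<sigma>_def)
    also have "g ` (A - B) = B - A" using g by (simp add: bij_betw_def)
    finally show ?thesis by blast
  qed
  moreover have "\<forall>x. x \<notin> A \<union> B \<longrightarrow> \<sigma> x = x" by (auto simp: \<sigma>_def)
  ultimately show ?thesis by blast
qed

lemma exists_bij_intervals_onto: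
  fixes G :: "nat \<Rightarrow> nat set"
  assumes fin: "\<And>N. finite (G N)" and tail: "\<And>N. G N \<subseteq> {N..}"
  obtains p and N :: "nat \<Rightarrow> nat" where "bij p" "strict_mono N"
    "\<And>k. p ` {N k..<N k + card (G (N k))} = G (N k)"
proof -
  \<comment> \<open>Block \<open>k\<close> is \<open>[N k, N (k+1))\<close>; it contains both \<open>G (N k)\<close> and the interval of the same size
    starting at \<open>N k\<close>, and an involution of the block swaps the two.\<close>
  define b where "b n = Suc (Max (insert (n + card (G n)) (G n)))" for n
  have le_Max: "m \<le> Max (insert (n + card (G n)) (G n))" if "m \<in> insert (n + card (G n)) (G n)" for m n
    using fin[of n] that by simp
  have G_block: "G n \<subseteq> {n..<b n}" for n
    using tail[of n] le_Max[of _ n] by (force simp: b_def less_Suc_eq_le)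
  have I_block: "{n..<n + card (G n)} \<subseteq> {n..<b n}" for n
    using le_Max[of "n + card (G n)" n] by (auto simp: b_def less_Suc_eq_le)
  have b_gt: "n < b n" for n
    using le_Max[of "n + card (G n)" n] by (simp add: b_def)
  define N where "N k = (b ^^ k) 0" for k
  have N_Suc: "N (Suc k) = b (N k)" for k by (simp add: N_def)
  have "strict_mono N"
    by (rule strict_monoI_Suc) (simp add: N_Suc b_gt)
  define I where "I k = {N k..<N k + card (G (N k))}" for k
  have support: "I k \<union> G (N k) \<subseteq> {N k..<N (Suc k)}" for k
    using G_block[of "N k"] I_block[of "N k"] by (simp add: I_def N_Suc)
  have "\<forall>k. \<exists>\<sigma>. (\<forall>x. \<sigma> (\<sigma> x) = x) \<and> \<sigma> ` I k = G (N k) \<and> (\<forall>x. x \<notin> I k \<union> G (N k) \<longrightarrow> \<sigma> x = x)"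
    by (intro allI exists_involution_image_eq) (simp_all add: I_def fin)
  from choice[OF this] obtain \<sigma> where "\<forall>k. (\<forall>x. \<sigma> k (\<sigma> k x) = x) \<and> \<sigma> k ` I k = G (N k)
      \<and> (\<forall>x. x \<notin> I k \<union> G (N k) \<longrightarrow> \<sigma> k x = x)"
    by blast
  then have invol: "\<And>k x. \<sigma> k (\<sigma> k x) = x" and image: "\<And>k. \<sigma> k ` I k = G (N k)"
    and fixed: "\<And>k x. x \<notin> I k \<union> G (N k) \<Longrightarrow> \<sigma> k x = x"
    by blast+
  have block: "\<sigma> k x \<in> {N k..<N (Suc k)}" if "x \<in> {N k..<N (Suc k)}" for k x
  proof (cases "x \<in> I k \<union> G (N k)")
    case True
    have "\<sigma> k ` G (N k) = \<sigma> k ` \<sigma> k ` I k" by (simp add: image)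
    also have "\<dots> = I k" by (simp add: image_image invol)
    finally have "\<sigma> k x \<in> I k \<union> G (N k)" using True image by blast
    then show ?thesis using support by blast
  qed (use that fixed in auto)
  have "N 0 = 0" by (simp add: N_def)
  obtain p where "bij p" and p: "\<And>k n. n \<in> {N k..<N (Suc k)} \<Longrightarrow> p n = \<sigma> k n"
    using bij_glue_block_involutions[OF \<open>strict_mono N\<close> \<open>N 0 = 0\<close> block invol] by blast
  have "p ` I k = G (N k)" for k
  proof -
    have "p ` I k = \<sigma> k ` I k" using support p by (intro image_cong) blast+
    then show ?thesis by (simp add: image)
  qed
  with \<open>bij p\<close> \<open>strict_mono N\<close> show ?thesis unfolding I_def by (rule that)
qed

definition unconditionally_cauchy :: "(nat \<Rightarrow> 'a::real_normed_vector) \<Rightarrow> bool" where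
  "unconditionally_cauchy f \<longleftrightarrow>
     (\<forall>\<epsilon>>0. \<exists>N. \<forall>F. finite F \<and> F \<subseteq> {N..} \<longrightarrow> norm (sum f F) < \<epsilon>)"

lemma unconditionally_cauchy_if_rearrangements_summable:
  fixes f :: "nat \<Rightarrow> 'a::banach"
  assumes "\<And>p. bij p \<Longrightarrow> summable (\<lambda>n. f (p n))"
  shows "unconditionally_cauchy f"
  unfolding unconditionally_cauchy_def
proof (intro allI impI, rule ccontr)
  fix \<epsilon> :: real assume "\<epsilon> > 0" and "\<nexists>N. \<forall>F. finite F \<and> F \<subseteq> {N..} \<longrightarrow> norm (sum f F) < \<epsilon>"
  then have "\<forall>N. \<exists>F. finite F \<and> F \<subseteq> {N..} \<and> \<epsilon> \<le> norm (sum f F)" by (auto simp: not_less)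
  then obtain G where fin: "\<And>N. finite (G N)" and tail: "\<And>N. G N \<subseteq> {N..}"
    and big: "\<And>N. \<epsilon> \<le> norm (sum f (G N))"
    by metis
  obtain p and N :: "nat \<Rightarrow> nat" where "bij p" "strict_mono N"
    and p: "\<And>k. p ` {N k..<N k + card (G (N k))} = G (N k)"
    using exists_bij_intervals_onto[OF fin tail] by blast
  from assms[OF \<open>bij p\<close>] obtain M where M: "\<And>m n. m \<ge> M \<Longrightarrow> norm (\<Sum>i=m..<n. f (p i)) < \<epsilon>"
    using \<open>\<epsilon> > 0\<close> unfolding summable_Cauchy by blast
  define I where "I = {N M..<N M + card (G (N M))}"
  have "inj_on p I"
    using bij_is_inj[OF \<open>bij p\<close>] by (rule inj_on_subset) simp
  then have "(\<Sum>i\<in>I. f (p i)) = sum f (p ` I)" by (simp add: sum.reindex)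
  also have "\<dots> = sum f (G (N M))" unfolding I_def by (simp only: p)
  finally have "(\<Sum>i\<in>I. f (p i)) = sum f (G (N M))" .
  moreover have "M \<le> N M" using \<open>strict_mono N\<close> by (rule strict_mono_imp_increasing)
  ultimately show False using M[of "N M" "N M + card (G (N M))"] big[of "N M"] by (simp add: I_def)
qed

lemma norm_add_sum_scaleR_le:
  fixes f :: "'i \<Rightarrow> 'a::real_normed_vector"
  assumes "finite S" and "\<And>F. F \<subseteq> S \<Longrightarrow> norm (y + sum f F) \<le> M"
    and "\<And>n. n \<in> S \<Longrightarrow> 0 \<le> t n \<and> t n \<le> 1"
  shows "norm (y + (\<Sum>n\<in>S. t n *\<^sub>R f n)) \<le> M"
  using assms
proof (induction S arbitrary: y rule: finite_induct)
  case empty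
  then show ?case by fastforce
next
  case (insert a S)
  define z where "z = (\<Sum>n\<in>S. t n *\<^sub>R f n)"
  have without_a: "norm (y + z) \<le> M"
    unfolding z_def using insert.prems by (intro insert.IH) auto
  have shifted: "norm (y + f a + sum f F) \<le> M" if "F \<subseteq> S" for F
  proof -
    have "a \<notin> F" "finite F" using that insert.hyps finite_subset by auto
    then have "y + f a + sum f F = y + sum f (insert a F)" by (simp add: add.assoc)
    also have "norm \<dots> \<le> M" using that by (intro insert.prems(1)) blast
    finally show ?thesis .
  qed
  have with_a: "norm (y + f a + z) \<le> M"
    unfolding z_def by (rule insert.IH) (use shifted insert.prems(2) in auto)
  have t: "0 \<le> t a" "t a \<le> 1" using insert.prems by auto
  have "y + (\<Sum>n\<in>insert a S. t n *\<^sub>R f n) = (1 - t a) *\<^sub>R (y + z) + t a *\<^sub>R (y + f a + z)"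
    using insert.hyps by (simp add: z_def algebra_simps)
  also have "norm \<dots> \<le> (1 - t a) * norm (y + z) + t a * norm (y + f a + z)"
    using norm_triangle_ineq[of "(1 - t a) *\<^sub>R (y + z)" "t a *\<^sub>R (y + f a + z)"] t by simp
  also have "\<dots> \<le> (1 - t a) * M + t a * M"
    using t without_a with_a by (intro add_mono mult_left_mono) auto
  finally show ?case by (simp add: algebra_simps)
qed

lemma norm_sum_scaleR_le:
  fixes f :: "'i \<Rightarrow> 'a::real_normed_vector"
  assumes "finite S" and "\<And>F. F \<subseteq> S \<Longrightarrow> norm (sum f F) \<le> M" and "\<And>n. \<bar>t n\<bar> \<le> 1"
  shows "norm (\<Sum>n\<in>S. t n *\<^sub>R f n) \<le> 2 * M"
proof -
  have parts: "norm (\<Sum>n\<in>S. s n *\<^sub>R f n) \<le> M" if "\<And>n. 0 \<le> s n \<and> s n \<le> 1" for s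
    using norm_add_sum_scaleR_le[of S 0 f M s] assms(1,2) that by simp
  have "t n *\<^sub>R f n = max (t n) 0 *\<^sub>R f n - max (- t n) 0 *\<^sub>R f n" for n
    by (cases "t n \<ge> 0") auto
  then have "(\<Sum>n\<in>S. t n *\<^sub>R f n) = (\<Sum>n\<in>S. max (t n) 0 *\<^sub>R f n) - (\<Sum>n\<in>S. max (- t n) 0 *\<^sub>R f n)"
    by (simp add: sum_subtractf)
  also have "norm \<dots> \<le> norm (\<Sum>n\<in>S. max (t n) 0 *\<^sub>R f n) + norm (\<Sum>n\<in>S. max (- t n) 0 *\<^sub>R f n)"
    by (rule norm_triangle_ineq4)
  also have "\<dots> \<le> M + M"
    using assms(3) by (intro add_mono parts) (auto simp: abs_le_iff)
  finally show ?thesis by simp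
qed

lemma summable_scaleR_if_unconditionally_cauchy:
  fixes f :: "nat \<Rightarrow> 'a::banach"
  assumes "unconditionally_cauchy f" and "\<And>n. \<bar>t n\<bar> \<le> 1"
  shows "summable (\<lambda>n. t n *\<^sub>R f n)"
  unfolding summable_Cauchy
proof (intro allI impI)
  fix \<epsilon> :: real assume "\<epsilon> > 0"
  then have "\<epsilon> / 3 > 0" by simp
  then obtain N where N: "\<forall>F. finite F \<and> F \<subseteq> {N..} \<longrightarrow> norm (sum f F) < \<epsilon> / 3"
    using assms(1) unfolding unconditionally_cauchy_def by blast
  have "norm (\<Sum>i=m..<n. t i *\<^sub>R f i) < \<epsilon>" if "N \<le> m" for m n
  proof -
    have "norm (sum f F) \<le> \<epsilon> / 3" if "F \<subseteq> {m..<n}" for F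
    proof -
      have "finite F" using that finite_subset by blast
      moreover have "F \<subseteq> {N..}" using that \<open>N \<le> m\<close> by auto
      ultimately show ?thesis using N by (simp add: less_imp_le)
    qed
    then have "norm (\<Sum>i=m..<n. t i *\<^sub>R f i) \<le> 2 * (\<epsilon> / 3)"
      using assms(2) by (intro norm_sum_scaleR_le) auto
    with \<open>\<epsilon> > 0\<close> show ?thesis by linarith
  qed
  then show "\<exists>N. \<forall>m\<ge>N. \<forall>n. norm (\<Sum>i=m..<n. t i *\<^sub>R f i) < \<epsilon>" by blast
qed

lemma solid_brick_if_unconditional_basis:
  fixes e :: "nat \<Rightarrow> 'a::banach"
  assumes "unconditional_basis e"
  shows "solid_brick e \<epsilon>"
  unfolding solid_brick_def
proof (intro ballI allI impI)
  fix x a assume a: "\<forall>n. \<bar>a n\<bar> \<le> \<bar>coord e n x\<bar>"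
  define t where "t n = a n / coord e n x" for n
  have "summable (\<lambda>n. coord e (p n) x *\<^sub>R e (p n))" if "bij p" for p
    using assms that by (simp add: unconditional_basis_def)
  then have "unconditionally_cauchy (\<lambda>n. coord e n x *\<^sub>R e n)"
    by (rule unconditionally_cauchy_if_rearrangements_summable)
  moreover have "\<bar>t n\<bar> \<le> 1" for n
    using a by (simp add: t_def abs_divide divide_le_eq_1)
  ultimately have "summable (\<lambda>n. t n *\<^sub>R (coord e n x *\<^sub>R e n))"
    by (rule summable_scaleR_if_unconditionally_cauchy)
  moreover have "t n * coord e n x = a n" for n
    using a[rule_format, of n] by (cases "coord e n x = 0") (auto simp: t_def)
  ultimately show "summable (\<lambda>n. a n *\<^sub>R e n)" by simp
qed

lemma solid_brick_if_summable:
  fixes e :: "nat \<Rightarrow> 'a::banach"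
  assumes "normalized_basis e" and "summable \<epsilon>"
  shows "solid_brick e \<epsilon>"
  unfolding solid_brick_def
proof (intro ballI allI impI)
  fix x a assume "x \<in> brick e \<epsilon>" and a: "\<forall>n. \<bar>a n\<bar> \<le> \<bar>coord e n x\<bar>"
  have "norm (a n *\<^sub>R e n) \<le> \<epsilon> n" for n
    using a[rule_format, of n] \<open>x \<in> brick e \<epsilon>\<close> assms(1)
    by (auto simp: brick_def normalized_basis_def intro: order_trans)
  then have "\<exists>N. \<forall>n\<ge>N. norm (a n *\<^sub>R e n) \<le> \<epsilon> n" by blast
  then show "summable (\<lambda>n. a n *\<^sub>R e n)" using assms(2) by (rule summable_comparison_test)
qed

theorem proposition2p5:
  fixes e :: "nat \<Rightarrow> 'a::banach" and \<epsilon> :: "nat \<Rightarrow> real"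
  assumes "schauder_basis e" and "normalized_basis e"
    and "\<And>n. \<epsilon> n \<ge> 0"
  shows "(unconditional_basis e \<longrightarrow> solid_brick e \<epsilon>) \<and> (summable \<epsilon> \<longrightarrow> solid_brick e \<epsilon>)"
  by (simp add: solid_brick_if_unconditional_basis solid_brick_if_summable assms(2))

end
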